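(* For every $\mathcal{A}\subseteq[\omega]^\omega$, Player I has a winning strategy in the reaping* game with respect to $\mathcal{A}$.
   Context: For $x\subseteq\omega$ and $y\in[\omega]^\omega$, $y$ reaps $x$ if $y\subseteq^* x$ or $y\subseteq^*\omega\setminus x$ (where $A\subseteq^* B$ means $A\setminus B$ is finite). For $\mathcal{A}\subseteq[\omega]^\omega$, the reaping* game with respect to $\mathcal{A}$: at round $k$, Player I plays $i_k\in\{0,1\}$ and then Player II plays $j_k\in\{0,1\}$. Player II wins iff $j_k=1$ for infinitely many $k$, $\{k:j_k=1\}\in\mathcal{A}$, and $\{k:j_k=1\}$ reaps $\{k:i_k=1\}$. *)

theory Defs
  imports Main
begin

text \<open>Moves are in \<open>{0,1}\<close>, encoded as bool (True = 1).\<close>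

definition almost_subset :: "nat set \<Rightarrow> nat set \<Rightarrow> bool" where
  "almost_subset A B \<longleftrightarrow> finite (A - B)"

definition reaps :: "nat set \<Rightarrow> nat set \<Rightarrow> bool" where
  "reaps y x \<longleftrightarrow> infinite y \<and> (almost_subset y x \<or> almost_subset y (UNIV - x))"

text \<open>A strategy for Player I: given the list of Player II's previous moves
  \<open>[j_0,...,j_{k-1}]\<close> (Player I's own previous moves are determined by these),
  return the move \<open>i_k\<close>.\<close>
type_synonym strategyI = "bool list \<Rightarrow> bool"

definition playI :: "strategyI \<Rightarrow> (nat \<Rightarrow> bool) \<Rightarrow> nat \<Rightarrow> bool" where
  "playI \<sigma> j k = \<sigma> (map j [0..<k])"

definition II_wins :: "nat set set \<Rightarrow> (nat \<Rightarrow> bool) \<Rightarrow> (nat \<Rightarrow> bool) \<Rightarrow> bool" where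
  "II_wins \<A> i j \<longleftrightarrow> infinite {k. j k} \<and> {k. j k} \<in> \<A> \<and> reaps {k. j k} {k. i k}"

definition winning_strategyI :: "nat set set \<Rightarrow> strategyI \<Rightarrow> bool" where
  "winning_strategyI \<A> \<sigma> \<longleftrightarrow> (\<forall>j. \<not> II_wins \<A> (playI \<sigma> j) j)"

end

theory Submission
  imports Defs "HOL-Library.Infinite_Set"
begin

text \<open>Player I answers with the parity of the number of 1s Player II has played so far. Then along
  the increasing enumeration \<open>y\<^sub>0 < y\<^sub>1 < \<dots>\<close> of \<open>y = {k. j\<^sub>k = 1}\<close> Player I plays
  \<open>i\<^bsub>y\<^sub>n\<^esub> = 1\<close> exactly when \<open>n\<close> is odd, so whenever \<open>y\<close> is infinite both \<open>y \<inter> x\<close> and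
  \<open>y - x\<close> are infinite and \<open>y\<close> does not reap \<open>x = {k. i\<^sub>k = 1}\<close>, whatever \<open>\<A>\<close> is.\<close>

definition parity_strategy :: strategyI where
  "parity_strategy js \<longleftrightarrow> odd (length (filter id js))"

lemma card_less_enumerate:
  assumes "infinite (S :: nat set)"
  shows "card {m \<in> S. m < enumerate S n} = n"
proof -
  have "{m \<in> S. m < enumerate S n} = enumerate S ` {..<n}"
  proof
    show "{m \<in> S. m < enumerate S n} \<subseteq> enumerate S ` {..<n}"
    proof
      fix m assume m: "m \<in> {m \<in> S. m < enumerate S n}"
      then obtain k where "m = enumerate S k" using enumerate_Ex[OF assms] by blast
      with m assms show "m \<in> enumerate S ` {..<n}" by auto
    qed
    show "enumerate S ` {..<n} \<subseteq> {m \<in> S. m < enumerate S n}"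
      using assms enumerate_in_set by auto
  qed
  moreover have "inj (enumerate S)" using inj_enumerate assms by blast
  ultimately show ?thesis by (simp add: card_image inj_on_subset)
qed

lemma playI_parity_strategy:
  "playI parity_strategy j k \<longleftrightarrow> odd (card {m. m < k \<and> j m})"
proof -
  have "{i. i < k \<and> map j [0..<k] ! i} = {m. m < k \<and> j m}" by auto
  then show ?thesis by (simp add: playI_def parity_strategy_def length_filter_conv_card)
qed

lemma playI_parity_strategy_enumerate:
  assumes "infinite {k. j k}"
  shows "playI parity_strategy j (enumerate {k. j k} n) \<longleftrightarrow> odd n"
proof -
  have "{m. m < enumerate {k. j k} n \<and> j m} = {m \<in> {k. j k}. m < enumerate {k. j k} n}"
    by auto
  then show ?thesis
    using card_less_enumerate[OF assms] by (simp add: playI_parity_strategy)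
qed

lemma not_reaps_if_split:
  assumes "infinite (y \<inter> x)" and "infinite (y - x)"
  shows "\<not> reaps y x"
proof -
  have "y - (UNIV - x) = y \<inter> x" by blast
  then show ?thesis using assms unfolding reaps_def almost_subset_def by auto
qed

lemma not_reaps_alternating_enumeration:
  assumes "infinite y" and alternating: "\<And>n. enumerate y n \<in> x \<longleftrightarrow> odd n"
  shows "\<not> reaps y x"
proof (rule not_reaps_if_split)
  have inj: "inj_on (enumerate y) N" for N
    using inj_enumerate[OF assms(1)] by (meson inj_on_subset subset_UNIV)
  have infinite_image: "infinite (enumerate y ` {n. P n})" if "infinite {n. P n}" for P
    using that finite_imageD[OF _ inj] by blast
  have "infinite {n::nat. odd n}" "infinite {n::nat. even n}"
    unfolding infinite_nat_iff_unbounded_le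
    by (metis mem_Collect_eq le_add1 odd_two_times_div_two_succ dvd_triv_left mult_2 even_add odd_one)+
  note infinite_odd = infinite_image[OF this(1)] and infinite_even = infinite_image[OF this(2)]
  have "enumerate y ` {n. odd n} \<subseteq> y \<inter> x"
    using alternating enumerate_in_set[OF assms(1)] by auto
  then show "infinite (y \<inter> x)"
    using infinite_odd finite_subset by blast
  have "enumerate y ` {n. even n} \<subseteq> y - x"
    using alternating enumerate_in_set[OF assms(1)] by auto
  then show "infinite (y - x)"
    using infinite_even finite_subset by blast
qed

theorem mainTheorem8:
  fixes \<A> :: "nat set set"
  assumes "\<forall>y\<in>\<A>. infinite y"
  shows "\<exists>\<sigma>. winning_strategyI \<A> \<sigma>"
proof
  show "winning_strategyI \<A> parity_strategy"
    unfolding winning_strategyI_def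
  proof (intro allI notI)
    fix j assume wins: "II_wins \<A> (playI parity_strategy j) j"
    then have "infinite {k. j k}" by (simp add: II_wins_def)
    then have "\<not> reaps {k. j k} {k. playI parity_strategy j k}"
      by (rule not_reaps_alternating_enumeration)
        (simp add: playI_parity_strategy_enumerate[OF \<open>infinite {k. j k}\<close>])
    with wins show False by (simp add: II_wins_def)
  qed
qed

end
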